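(* Let $(X,d)$ be a complete ultrametric space. If $f:X\to X$ is an eventually $1$-Lipschitz map, then $f$ has the shadowing property.
   Context: An ultrametric space satisfies $d(x,z)\le\max\{d(x,y),d(y,z)\}$ for all $x,y,z$. A map $f:X\to X$ is eventually Lipschitz $L$ if there is $\varepsilon>0$ such that $d(f(x),f(y))\le L\,d(x,y)$ whenever $d(x,y)<\varepsilon$. Shadowing property: for every $\varepsilon>0$ there is $\delta>0$ such that every sequence $(x_n)_{n\in\mathbb{N}}$ with $d(f(x_n),x_{n+1})<\delta$ for all $n$ admits $x\in X$ with $d(f^n(x),x_n)<\varepsilon$ for all $n\in\mathbb{N}$. *)

theory Defs
  imports "HOL-Analysis.Analysis"
begin

definition ultrametric :: "('a \<Rightarrow> 'a \<Rightarrow> real) \<Rightarrow> bool" where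
  "ultrametric d \<longleftrightarrow> (\<forall>x y z. d x z \<le> max (d x y) (d y z))"

definition eventually_lipschitz ::
  "('a \<Rightarrow> 'a \<Rightarrow> real) \<Rightarrow> real \<Rightarrow> ('a \<Rightarrow> 'a) \<Rightarrow> bool" where
  "eventually_lipschitz d L f \<longleftrightarrow>
     (\<exists>\<epsilon>>0. \<forall>x y. d x y < \<epsilon> \<longrightarrow> d (f x) (f y) \<le> L * d x y)"

definition shadowing :: "('a \<Rightarrow> 'a \<Rightarrow> real) \<Rightarrow> ('a \<Rightarrow> 'a) \<Rightarrow> bool" where
  "shadowing d f \<longleftrightarrow>
     (\<forall>\<epsilon>>0. \<exists>\<delta>>0. \<forall>xs :: nat \<Rightarrow> 'a.
        (\<forall>n. d (f (xs n)) (xs (Suc n)) < \<delta>) \<longrightarrow>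
        (\<exists>x. \<forall>n. d ((f ^^ n) x) (xs n) < \<epsilon>))"

end

theory Submission
  imports Defs
begin

text \<open>The exact orbit of the first point of a \<open>\<delta>\<close>-pseudo-orbit already \<open>\<delta>\<close>-shadows it, once
  \<open>\<delta>\<close> is below the Lipschitz scale: if \<open>d (f\<^sup>n x) (x\<^sub>n) < \<delta>\<close>, then \<open>f\<close> does not increase this
  distance, and the ultrametric inequality through \<open>f (x\<^sub>n)\<close> keeps the next error below \<open>\<delta>\<close>.\<close>

lemma ultrametric_pseudo_orbit_tracked:
  assumes ultra: "ultrametric d"
    and nonexpanding: "\<And>x y. d x y < \<delta> \<Longrightarrow> d (f x) (f y) \<le> d x y"
    and pseudo_orbit: "\<And>n. d (f (xs n)) (xs (Suc n)) < \<delta>"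
    and start: "d x (xs 0) < \<delta>"
  shows "d ((f ^^ n) x) (xs n) < \<delta>"
proof (induction n)
  case 0
  then show ?case using start by simp
next
  case (Suc n)
  have "d ((f ^^ Suc n) x) (xs (Suc n))
      \<le> max (d (f ((f ^^ n) x)) (f (xs n))) (d (f (xs n)) (xs (Suc n)))"
    using ultra unfolding ultrametric_def by simp
  moreover have "d (f ((f ^^ n) x)) (f (xs n)) < \<delta>"
    using nonexpanding[OF Suc.IH] Suc.IH by linarith
  ultimately show ?case using pseudo_orbit[of n] by linarith
qed

lemma ultrametric_eventually_nonexpanding_imp_shadowing:
  assumes "ultrametric d" and "\<forall>x. d x x = 0" and "eventually_lipschitz d 1 f"
  shows "shadowing d f"
  unfolding shadowing_def
proof (intro allI impI)
  fix \<epsilon> :: real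
  assume "\<epsilon> > 0"
  obtain \<eta> where "\<eta> > 0" and nonexpanding: "\<And>x y. d x y < \<eta> \<Longrightarrow> d (f x) (f y) \<le> d x y"
    using assms(3) unfolding eventually_lipschitz_def by auto
  have "d ((f ^^ n) (xs 0)) (xs n) < \<epsilon>"
    if "\<forall>n. d (f (xs n)) (xs (Suc n)) < min \<epsilon> \<eta>" for xs n
    using ultrametric_pseudo_orbit_tracked[OF assms(1), of "min \<epsilon> \<eta>" f xs "xs 0" n]
      nonexpanding that assms(2) \<open>\<epsilon> > 0\<close> \<open>\<eta> > 0\<close> by auto
  then show "\<exists>\<delta>>0. \<forall>xs. (\<forall>n. d (f (xs n)) (xs (Suc n)) < \<delta>) \<longrightarrow>
      (\<exists>x. \<forall>n. d ((f ^^ n) x) (xs n) < \<epsilon>)"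
    using \<open>\<epsilon> > 0\<close> \<open>\<eta> > 0\<close> by (intro exI[of _ "min \<epsilon> \<eta>"]) auto
qed

theorem corollary5p3:
  fixes f :: "'a::metric_space \<Rightarrow> 'a"
  assumes "complete (UNIV :: 'a set)"
    and "ultrametric (dist :: 'a \<Rightarrow> 'a \<Rightarrow> real)"
    and "eventually_lipschitz dist 1 f"
  shows "shadowing dist f"
  using ultrametric_eventually_nonexpanding_imp_shadowing[OF assms(2) _ assms(3)] by simp

end
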